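(* In the unknown-network setting, both the random dictatorship mechanism $g^{R}$ and the duples mechanism $g^{D}$ are valid and DSIC.
   Context: Let $V=\{1,\dots,n\}$, $n\ge2$. A relationship network assigns to every unordered pair of distinct agents one of the symmetric relations friends, enemies, impartial. Preferences: fix $w_f,w_e>0$; an agent $i$ with friend set $F$ and enemy set $E$ ranks $p,p'\in[0,1]^V$ by $p\succ p'$ iff $p_i>p'_i$, or $p_i=p'_i$ and $w_f\sum_{j\in F}(p_j-p'_j)-w_e\sum_{j\in E}(p_j-p'_j)>0$; $p\succsim p'$ means not $p'\succ p$. Unknown-network setting: agent $i$'s type set $\Theta_i$ is the set of triples $m_i=(N_i,F_i,E_i)$ with $N_i\subseteq V$ and $F_i,E_i$ disjoint subsets of $V\setminus\{i\}$; set $I_i=V\setminus(\{i\}\cup F_i\cup E_i)$. A mechanism $g:\prod_i\Theta_i\to[0,1]^V$ is valid if $\sum_ig_i(\mathbf m)\le1$ always, and DSIC if for all $i$, $\mathbf m$, $m'_i$: $g(\mathbf m)\succsim_{m_i}g(m'_i,\mathbf m_{-i})$, where $\succsim_{m_i}$ is the preference of $i$ with the friend and enemy sets in $m_i$. Random dictatorship: for agent $j$ define the choice set $C_j(\mathbf m)$ as: if $F_j\ne\varnothing$, $C_j=F_j\cap N_j$ if this is nonempty, else $C_j=F_j$; if $F_j=\varnothing\ne I_j$, $C_j=I_j\cap N_j$ if nonempty, else $C_j=I_j$; if $F_j=I_j=\varnothing$, $C_j=E_j\cap N_j$ if nonempty, else $C_j=E_j$. Let $g^R_{i|j}(\mathbf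 m)=1/|C_j(\mathbf m)|$ if $i\in C_j(\mathbf m)$ and $0$ otherwise, and $g^R_i(\mathbf m)=\frac1n\sum_{j\in V\setminus\{i\}}g^R_{i|j}(\mathbf m)$. Duples: for an agent $l$ and $j\in V\setminus\{l\}$ let $\mathrm{lev}_l(j)=1,2,3,4,5,6$ according as $j\in F_l\cap N_l$, $F_l\setminus N_l$, $I_l\cap N_l$, $I_l\setminus N_l$, $E_l\cap N_l$, $E_l\setminus N_l$ (using $l$'s report). For distinct $j,k$, agent $l\notin\{j,k\}$ votes for $j$ against $k$ if $\mathrm{lev}_l(j)<\mathrm{lev}_l(k)$ (and abstains if equal). Let $x_{jk}(\mathbf m)$ be the number of agents voting for $j$ against $k$. Set $g^D_j(\{j,k\},\mathbf m)=1,\tfrac12,0$ according as $x_{jk}>x_{kj}$, $x_{jk}=x_{kj}$, $x_{jk}<x_{kj}$, and $g^D_k(\{j,k\},\mathbf m)=1-g^D_j(\{j,k\},\mathbf m)$. Then $g^D_i(\mathbf m)=\frac{2}{n(n-1)}\sum_{j\in V\setminus\{i\}}g^D_i(\{i,j\},\mathbf m)$. *)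

theory Defs
  imports Main Complex_Main
begin

text \<open>A profile assigns a report to every agent;
  only the values on V = {1..n} are ever used.  Outcomes are functions
  nat \<Rightarrow> real (only values on V are relevant).\<close>

type_synonym report = "nat set \<times> nat set \<times> nat set"
type_synonym profile = "nat \<Rightarrow> report"
type_synonym outcome = "nat \<Rightarrow> real"

definition agents :: "nat \<Rightarrow> nat set" where
  "agents n = {1..n}"

definition rN :: "report \<Rightarrow> nat set" where "rN m = fst m"
definition rF :: "report \<Rightarrow> nat set" where "rF m = fst (snd m)"
definition rE :: "report \<Rightarrow> nat set" where "rE m = snd (snd m)"

definition Theta :: "nat \<Rightarrow> nat \<Rightarrow> report set" where
  "Theta n i = {(N, F, E). N \<subseteq> agents n \<and> F \<subseteq> agents n - {i} \<and>
                           E \<subseteq> agents n - {i} \<and> F \<inter> E = {}}"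

definition rI :: "nat \<Rightarrow> nat \<Rightarrow> report \<Rightarrow> nat set" where
  "rI n i m = agents n - ({i} \<union> rF m \<union> rE m)"

definition profiles :: "nat \<Rightarrow> profile set" where
  "profiles n = {m. \<forall>i\<in>agents n. m i \<in> Theta n i}"

definition strict_pref :: "real \<Rightarrow> real \<Rightarrow> nat \<Rightarrow> nat set \<Rightarrow> nat set \<Rightarrow>
    outcome \<Rightarrow> outcome \<Rightarrow> bool" where
  "strict_pref w_f w_e i F E p p' \<longleftrightarrow>
     p i > p' i \<or>
     (p i = p' i \<and> w_f * (\<Sum>j\<in>F. p j - p' j) - w_e * (\<Sum>j\<in>E. p j - p' j) > 0)"

definition weak_pref :: "real \<Rightarrow> real \<Rightarrow> nat \<Rightarrow> nat set \<Rightarrow> nat set \<Rightarrow>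
    outcome \<Rightarrow> outcome \<Rightarrow> bool" where
  "weak_pref w_f w_e i F E p p' \<longleftrightarrow> \<not> strict_pref w_f w_e i F E p' p"

definition valid :: "nat \<Rightarrow> (profile \<Rightarrow> outcome) \<Rightarrow> bool" where
  "valid n g \<longleftrightarrow> (\<forall>m\<in>profiles n.
       (\<forall>i\<in>agents n. 0 \<le> g m i \<and> g m i \<le> 1) \<and> (\<Sum>i\<in>agents n. g m i) \<le> 1)"

definition DSIC :: "nat \<Rightarrow> real \<Rightarrow> real \<Rightarrow> (profile \<Rightarrow> outcome) \<Rightarrow> bool" where
  "DSIC n w_f w_e g \<longleftrightarrow> (\<forall>i\<in>agents n. \<forall>m\<in>profiles n. \<forall>m'\<in>Theta n i.
       weak_pref w_f w_e i (rF (m i)) (rE (m i)) (g m) (g (m(i := m'))))"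

definition restrictN :: "nat set \<Rightarrow> nat set \<Rightarrow> nat set" where
  "restrictN S N = (if S \<inter> N \<noteq> {} then S \<inter> N else S)"

definition choice_set :: "nat \<Rightarrow> profile \<Rightarrow> nat \<Rightarrow> nat set" where
  "choice_set n m j =
     (let N = rN (m j); F = rF (m j); E = rE (m j); I = rI n j (m j) in
      if F \<noteq> {} then restrictN F N
      else if I \<noteq> {} then restrictN I N
      else restrictN E N)"

definition gR_cond :: "nat \<Rightarrow> profile \<Rightarrow> nat \<Rightarrow> nat \<Rightarrow> real" where
  "gR_cond n m i j = (if i \<in> choice_set n m j then 1 / real (card (choice_set n m j)) else 0)"

definition gR :: "nat \<Rightarrow> profile \<Rightarrow> outcome" where
  "gR n m i = (1 / real n) * (\<Sum>j\<in>agents n - {i}. gR_cond n m i j)"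

definition lev :: "nat \<Rightarrow> report \<Rightarrow> nat \<Rightarrow> nat \<Rightarrow> nat" where
  "lev n ml l j =
     (if j \<in> rF ml \<inter> rN ml then 1
      else if j \<in> rF ml - rN ml then 2
      else if j \<in> rI n l ml \<inter> rN ml then 3
      else if j \<in> rI n l ml - rN ml then 4
      else if j \<in> rE ml \<inter> rN ml then 5
      else 6)"

definition votes :: "nat \<Rightarrow> profile \<Rightarrow> nat \<Rightarrow> nat \<Rightarrow> nat" where
  "votes n m j k = card {l \<in> agents n - {j, k}. lev n (m l) l j < lev n (m l) l k}"

definition gD_pair :: "nat \<Rightarrow> profile \<Rightarrow> nat \<Rightarrow> nat \<Rightarrow> real" where
  "gD_pair n m j k =
     (if votes n m j k > votes n m k j then 1
      else if votes n m j k = votes n m k j then 1/2 else 0)"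

definition gD :: "nat \<Rightarrow> profile \<Rightarrow> outcome" where
  "gD n m i = (2 / (real n * (real n - 1))) * (\<Sum>j\<in>agents n - {i}. gD_pair n m i j)"

end

theory Submission
  imports Defs
begin

text \<open>In both mechanisms an agent's report never influences her own share: she is never in her
  own choice set, and she does not vote on the duples containing her.  Her report only redistributes
  probability among the others, and the truthful report already pushes it as far as possible towards
  her friends and away from her enemies: in random dictatorship the truthful choice set lies inside
  the friends (failing friends, outside the enemies unless there is nobody else), and in the duples
  mechanism a truthful vote always favours a friend over a non-friend and a non-enemy over an enemy.
  Validity is a counting argument: each dictator hands out a total of 1, and each of the n(n-1)/2
  duples hands out 1.\<close>

lemma finite_agents [simp]: "finite (agents n)"
  by (simp add: agents_def)

lemma card_agents [simp]: "card (agents n) = n"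
  by (simp add: agents_def)

lemma agents_remove_nonempty:
  assumes "2 \<le> n"
  shows "agents n - {i} \<noteq> {}"
proof -
  have "1 \<in> agents n" "2 \<in> agents n"
    using assms by (auto simp: agents_def)
  then show ?thesis
    by (cases "i = 1") auto
qed

lemma sum_agents_remove_one:
  "i \<in> agents n \<Longrightarrow> (\<Sum>j\<in>agents n - {i}. 1 :: real) = real n - 1"
  by (simp add: of_nat_diff Suc_le_eq agents_def)

lemma Theta_memberD:
  assumes "r \<in> Theta n i"
  shows "rF r \<subseteq> agents n - {i}" "rE r \<subseteq> agents n - {i}" "rF r \<inter> rE r = {}"
  using assms by (cases r; auto simp: Theta_def rF_def rE_def)+

lemma Theta_member_partition:
  "r \<in> Theta n i \<Longrightarrow> rF r \<union> rI n i r \<union> rE r = agents n - {i}"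
  using Theta_memberD[of r n i] by (auto simp: rI_def)

lemma finite_rF_rE:
  assumes "r \<in> Theta n i"
  shows "finite (rF r)" "finite (rE r)"
  using Theta_memberD(1,2)[OF assms] by (auto intro: finite_subset[of _ "agents n - {i}"])

lemma profiles_memberD: "m \<in> profiles n \<Longrightarrow> j \<in> agents n \<Longrightarrow> m j \<in> Theta n j"
  by (simp add: profiles_def)

lemma profiles_fun_upd: "m \<in> profiles n \<Longrightarrow> r \<in> Theta n i \<Longrightarrow> m(i := r) \<in> profiles n"
  by (simp add: profiles_def)

lemma weak_pref_if_own_share_unchanged:
  assumes "w_f > 0" "w_e > 0" "p' i = p i"
    and "(\<Sum>j\<in>F. p' j) \<le> (\<Sum>j\<in>F. p j)" "(\<Sum>j\<in>E. p j) \<le> (\<Sum>j\<in>E. p' j)"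
  shows "weak_pref w_f w_e i F E p p'"
proof -
  have "w_f * (\<Sum>j\<in>F. p' j - p j) \<le> 0"
    using assms by (simp add: sum_subtractf mult_nonneg_nonpos)
  moreover have "w_e * (\<Sum>j\<in>E. p' j - p j) \<ge> 0"
    using assms by (simp add: sum_subtractf)
  ultimately show ?thesis
    using assms(3) by (auto simp: weak_pref_def strict_pref_def)
qed

lemma DSIC_if_own_share_unchanged:
  assumes "w_f > 0" "w_e > 0"
    and own: "\<And>i m r. i \<in> agents n \<Longrightarrow> m \<in> profiles n \<Longrightarrow> r \<in> Theta n i \<Longrightarrow>
      g (m(i := r)) i = g m i"
    and friends: "\<And>i m r. i \<in> agents n \<Longrightarrow> m \<in> profiles n \<Longrightarrow> r \<in> Theta n i \<Longrightarrow>
      (\<Sum>j\<in>rF (m i). g (m(i := r)) j) \<le> (\<Sum>j\<in>rF (m i). g m j)"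
    and enemies: "\<And>i m r. i \<in> agents n \<Longrightarrow> m \<in> profiles n \<Longrightarrow> r \<in> Theta n i \<Longrightarrow>
      (\<Sum>j\<in>rE (m i). g m j) \<le> (\<Sum>j\<in>rE (m i). g (m(i := r)) j)"
  shows "DSIC n w_f w_e g"
  unfolding DSIC_def
  using weak_pref_if_own_share_unchanged[OF assms(1,2) own friends enemies] by blast

lemma sum_offdiag_swap:
  assumes "finite V"
  shows "(\<Sum>i\<in>V. \<Sum>j\<in>V - {i}. f i j) = (\<Sum>j\<in>V. \<Sum>i\<in>V - {j}. f i j)"
proof -
  have "(\<Sum>i\<in>V. \<Sum>j\<in>{j \<in> V. i \<noteq> j}. f i j) = (\<Sum>j\<in>V. \<Sum>i\<in>{i \<in> V. i \<noteq> j}. f i j)"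
    using sum.swap_restrict[OF assms assms] .
  moreover have "{j \<in> V. i \<noteq> j} = V - {i}" "{i \<in> V. i \<noteq> j} = V - {j}" for i j
    by auto
  ultimately show ?thesis
    by simp
qed

lemma sum_offdiag_antisym:
  fixes D :: "'a \<Rightarrow> 'a \<Rightarrow> 'b :: linordered_ab_group_add"
  assumes "finite V" "A \<subseteq> V" and antisym: "\<And>k j. D k j = - D j k"
  shows "(\<Sum>k\<in>A. \<Sum>j\<in>V - {k}. D k j) = (\<Sum>k\<in>A. \<Sum>j\<in>V - A. D k j)"
proof -
  have diag: "D k k = 0" for k
    using antisym[of k k] by simp
  have split: "(\<Sum>j\<in>V - {k}. D k j) = (\<Sum>j\<in>A. D k j) + (\<Sum>j\<in>V - A. D k j)" if "k \<in> A" for k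
  proof -
    have "(\<Sum>j\<in>V - {k}. D k j) = (\<Sum>j\<in>V. D k j)"
      using that assms(1,2) diag by (subst sum.remove[of V k]) auto
    also have "\<dots> = (\<Sum>j\<in>A. D k j) + (\<Sum>j\<in>V - A. D k j)"
      using assms(1,2) by (metis add.commute sum.subset_diff)
    finally show ?thesis .
  qed
  have "(\<Sum>k\<in>A. \<Sum>j\<in>A. D k j) = (\<Sum>k\<in>A. \<Sum>j\<in>A. - D j k)"
    by (intro sum.cong refl antisym)
  also have "\<dots> = - (\<Sum>k\<in>A. \<Sum>j\<in>A. D k j)"
    by (subst sum.swap) (simp add: sum_negf)
  finally have inner: "(\<Sum>k\<in>A. \<Sum>j\<in>A. D k j) = 0"
    by simp
  show ?thesis
    using inner by (simp add: split sum.distrib)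
qed

section \<open>Random dictatorship\<close>

lemma restrictN_subset: "restrictN S N \<subseteq> S"
  by (auto simp: restrictN_def)

lemma restrictN_nonempty: "S \<noteq> {} \<Longrightarrow> restrictN S N \<noteq> {}"
  by (auto simp: restrictN_def)

lemma choice_set_subset_rF: "rF (m j) \<noteq> {} \<Longrightarrow> choice_set n m j \<subseteq> rF (m j)"
  using restrictN_subset by (simp add: choice_set_def Let_def)

lemma choice_set_subset_rF_rI:
  "rF (m j) \<union> rI n j (m j) \<noteq> {} \<Longrightarrow> choice_set n m j \<subseteq> rF (m j) \<union> rI n j (m j)"
  using restrictN_subset by (auto simp: choice_set_def Let_def)

lemma choice_set_subset_agents:
  assumes "m \<in> profiles n" "j \<in> agents n"
  shows "choice_set n m j \<subseteq> agents n - {j}"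
  using restrictN_subset Theta_member_partition[OF profiles_memberD[OF assms]]
  by (simp add: choice_set_def Let_def) blast

lemma finite_choice_set: "m \<in> profiles n \<Longrightarrow> j \<in> agents n \<Longrightarrow> finite (choice_set n m j)"
  by (rule finite_subset[OF choice_set_subset_agents]) simp_all

lemma choice_set_nonempty:
  assumes "m \<in> profiles n" "j \<in> agents n" "2 \<le> n"
  shows "choice_set n m j \<noteq> {}"
  using Theta_member_partition[OF profiles_memberD[OF assms(1,2)]] agents_remove_nonempty[OF assms(3)]
  by (auto simp: choice_set_def Let_def restrictN_nonempty)

lemma gR_cond_nonneg: "0 \<le> gR_cond n m k j"
  by (simp add: gR_cond_def)

lemma gR_cond_le_1: "gR_cond n m k j \<le> 1"
  by (cases "card (choice_set n m j)") (auto simp: gR_cond_def)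

lemma sum_gR_cond:
  assumes "finite A" "m \<in> profiles n" "j \<in> agents n"
  shows "(\<Sum>k\<in>A. gR_cond n m k j)
    = real (card (A \<inter> choice_set n m j)) / real (card (choice_set n m j))"
  using assms(1) by (simp add: gR_cond_def sum.If_cases Int_def)

lemma sum_gR_cond_le_1:
  assumes "finite A" "m \<in> profiles n" "j \<in> agents n"
  shows "(\<Sum>k\<in>A. gR_cond n m k j) \<le> 1"
  using card_mono[OF finite_choice_set[OF assms(2,3)], of "A \<inter> choice_set n m j"]
  by (cases "card (choice_set n m j) = 0") (simp_all add: sum_gR_cond[OF assms] divide_le_eq_1)

lemma sum_gR_cond_eq_1:
  assumes "finite A" "m \<in> profiles n" "j \<in> agents n" "2 \<le> n" "choice_set n m j \<subseteq> A"
  shows "(\<Sum>k\<in>A. gR_cond n m k j) = 1"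
  using assms(5) choice_set_nonempty[OF assms(2-4)] finite_choice_set[OF assms(2,3)]
  by (simp add: sum_gR_cond[OF assms(1-3)] Int_absorb1)

lemma sum_gR_cond_eq_0:
  assumes "finite A" "m \<in> profiles n" "j \<in> agents n" "A \<inter> choice_set n m j = {}"
  shows "(\<Sum>k\<in>A. gR_cond n m k j) = 0"
  using assms(4) by (simp add: sum_gR_cond[OF assms(1-3)])

lemma sum_gR_cond_friends_truthful_ge:
  assumes "m \<in> profiles n" "m' \<in> profiles n" "i \<in> agents n" "2 \<le> n"
  shows "(\<Sum>k\<in>rF (m i). gR_cond n m' k i) \<le> (\<Sum>k\<in>rF (m i). gR_cond n m k i)"
proof (cases "rF (m i) = {}")
  case False
  have fin: "finite (rF (m i))"
    using finite_rF_rE(1)[OF profiles_memberD[OF assms(1,3)]] .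
  have "(\<Sum>k\<in>rF (m i). gR_cond n m' k i) \<le> 1"
    by (rule sum_gR_cond_le_1[OF fin assms(2,3)])
  also have "1 = (\<Sum>k\<in>rF (m i). gR_cond n m k i)"
    by (rule sum_gR_cond_eq_1[OF fin assms(1,3,4) choice_set_subset_rF[of m i n, OF False], symmetric])
  finally show ?thesis .
qed simp

lemma sum_gR_cond_enemies_truthful_le:
  assumes "m \<in> profiles n" "m' \<in> profiles n" "i \<in> agents n" "2 \<le> n"
  shows "(\<Sum>k\<in>rE (m i). gR_cond n m k i) \<le> (\<Sum>k\<in>rE (m i). gR_cond n m' k i)"
proof (cases "rF (m i) \<union> rI n i (m i) = {}")
  case True
  \<comment> \<open>everybody else is an enemy, so every report hands all of i's probability to enemies\<close>
  then have E: "rE (m i) = agents n - {i}"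
    using Theta_member_partition[OF profiles_memberD[OF assms(1,3)]] by simp
  have "(\<Sum>k\<in>rE (m i). gR_cond n m k i) = 1"
    unfolding E
    by (rule sum_gR_cond_eq_1[OF _ assms(1,3,4) choice_set_subset_agents[OF assms(1,3)]]) simp
  also have "\<dots> = (\<Sum>k\<in>rE (m i). gR_cond n m' k i)"
    unfolding E
    by (rule sum_gR_cond_eq_1[OF _ assms(2,3,4) choice_set_subset_agents[OF assms(2,3)], symmetric])
      simp
  finally show ?thesis
    by simp
next
  case False
  have fin: "finite (rE (m i))"
    using finite_rF_rE(2)[OF profiles_memberD[OF assms(1,3)]] .
  have "rE (m i) \<inter> choice_set n m i = {}"
    using choice_set_subset_rF_rI[of m i n, OF False]
      Theta_memberD(3)[OF profiles_memberD[OF assms(1,3)]]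
    by (auto simp: rI_def)
  then have "(\<Sum>k\<in>rE (m i). gR_cond n m k i) = 0"
    by (rule sum_gR_cond_eq_0[OF fin assms(1,3)])
  then show ?thesis
    by (simp add: sum_nonneg gR_cond_nonneg)
qed

lemma gR_cond_fun_upd_other: "j \<noteq> i \<Longrightarrow> gR_cond n (m(i := r)) k j = gR_cond n m k j"
  by (simp add: gR_cond_def choice_set_def)

lemma gR_fun_upd_self: "gR n (m(i := r)) i = gR n m i"
  unfolding gR_def by (intro arg_cong[where f = "\<lambda>x. 1 / real n * x"] sum.cong)
    (auto simp: gR_cond_fun_upd_other)

lemma gR_fun_upd_other:
  assumes "i \<in> agents n" "k \<noteq> i"
  shows "gR n (m(i := r)) k = gR n m k + (gR_cond n (m(i := r)) k i - gR_cond n m k i) / real n"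
proof -
  have i: "i \<in> agents n - {k}"
    using assms by simp
  have "(\<Sum>j\<in>agents n - {k} - {i}. gR_cond n (m(i := r)) k j)
      = (\<Sum>j\<in>agents n - {k} - {i}. gR_cond n m k j)"
    by (rule sum.cong) (auto simp: gR_cond_fun_upd_other)
  then show ?thesis
    unfolding gR_def
    using sum.remove[OF _ i, of "gR_cond n (m(i := r)) k"] sum.remove[OF _ i, of "gR_cond n m k"]
    by (simp add: add_divide_distrib diff_divide_distrib)
qed

lemma sum_gR_fun_upd:
  assumes "i \<in> agents n" "i \<notin> A"
  shows "(\<Sum>k\<in>A. gR n (m(i := r)) k) = (\<Sum>k\<in>A. gR n m k)
    + ((\<Sum>k\<in>A. gR_cond n (m(i := r)) k i) - (\<Sum>k\<in>A. gR_cond n m k i)) / real n"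
proof -
  have "(\<Sum>k\<in>A. gR n (m(i := r)) k)
      = (\<Sum>k\<in>A. gR n m k + (gR_cond n (m(i := r)) k i - gR_cond n m k i) / real n)"
    using assms by (intro sum.cong refl gR_fun_upd_other) auto
  then show ?thesis
    by (simp add: sum.distrib sum_subtractf sum_divide_distrib[symmetric])
qed

lemma gR_DSIC:
  assumes "2 \<le> n" "w_f > 0" "w_e > 0"
  shows "DSIC n w_f w_e (gR n)"
proof (rule DSIC_if_own_share_unchanged[OF assms(2,3)])
  fix i m r
  assume i: "i \<in> agents n" and m: "m \<in> profiles n" and r: "r \<in> Theta n i"
  have "i \<notin> rF (m i)" "i \<notin> rE (m i)"
    using Theta_memberD[OF profiles_memberD[OF m i]] by auto
  then show "(\<Sum>j\<in>rF (m i). gR n (m(i := r)) j) \<le> (\<Sum>j\<in>rF (m i). gR n m j)"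
    and "(\<Sum>j\<in>rE (m i). gR n m j) \<le> (\<Sum>j\<in>rE (m i). gR n (m(i := r)) j)"
    using sum_gR_cond_friends_truthful_ge[OF m profiles_fun_upd[OF m r] i assms(1)]
      sum_gR_cond_enemies_truthful_le[OF m profiles_fun_upd[OF m r] i assms(1)]
    by (simp_all add: sum_gR_fun_upd[OF i] divide_nonpos_nonneg)
qed (rule gR_fun_upd_self)

lemma gR_valid:
  assumes "2 \<le> n"
  shows "valid n (gR n)"
  unfolding valid_def
proof (intro ballI conjI)
  fix m i assume "i \<in> agents n"
  show "0 \<le> gR n m i"
    by (simp add: gR_def sum_nonneg gR_cond_nonneg)
  have "(\<Sum>j\<in>agents n - {i}. gR_cond n m i j) \<le> (\<Sum>j\<in>agents n - {i}. 1)"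
    by (rule sum_mono) (rule gR_cond_le_1)
  also have "\<dots> = real n - 1"
    using \<open>i \<in> agents n\<close> by (rule sum_agents_remove_one)
  finally show "gR n m i \<le> 1"
    using assms by (simp add: gR_def field_simps)
next
  fix m assume m: "m \<in> profiles n"
  \<comment> \<open>regroup the shares by dictator; each dictator hands out at most 1\<close>
  have "(\<Sum>i\<in>agents n. \<Sum>j\<in>agents n - {i}. gR_cond n m i j)
      = (\<Sum>j\<in>agents n. \<Sum>i\<in>agents n - {j}. gR_cond n m i j)"
    by (rule sum_offdiag_swap) simp
  also have "\<dots> \<le> (\<Sum>j\<in>agents n. 1)"
    using m by (intro sum_mono sum_gR_cond_le_1) auto
  finally show "(\<Sum>i\<in>agents n. gR n m i) \<le> 1"
    using assms by (simp add: gR_def sum_divide_distrib[symmetric])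
qed

section \<open>Duples\<close>

lemma votes_fun_upd_member: "i \<in> {j, k} \<Longrightarrow> votes n (m(i := r)) j k = votes n m j k"
  unfolding votes_def by (rule arg_cong[where f = card]) auto

lemma gD_pair_fun_upd_member: "i \<in> {j, k} \<Longrightarrow> gD_pair n (m(i := r)) j k = gD_pair n m j k"
  by (simp add: gD_pair_def votes_fun_upd_member insert_commute)

lemma gD_pair_add_swap: "gD_pair n m j k + gD_pair n m k j = 1"
  by (simp add: gD_pair_def)

lemma gD_pair_nonneg: "0 \<le> gD_pair n m j k"
  by (simp add: gD_pair_def)

lemma gD_pair_le_1: "gD_pair n m j k \<le> 1"
  by (simp add: gD_pair_def)

lemma votes_fun_upd_mono:
  assumes "lev n (m i) i j < lev n (m i) i k"
  shows "votes n (m(i := r)) j k \<le> votes n m j k"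
    and "votes n m k j \<le> votes n (m(i := r)) k j"
  unfolding votes_def using assms
  by (auto intro!: card_mono intro: rev_finite_subset[of "agents n"])

lemma gD_pair_fun_upd_mono:
  assumes "lev n (m i) i j < lev n (m i) i k"
  shows "gD_pair n (m(i := r)) j k \<le> gD_pair n m j k"
  using assms votes_fun_upd_mono[of n m i j k r] by (auto simp: gD_pair_def)

lemma lev_friend: "j \<in> rF r \<Longrightarrow> lev n r l j \<le> 2"
  by (simp add: lev_def)

lemma lev_not_friend: "j \<notin> rF r \<Longrightarrow> 3 \<le> lev n r l j"
  by (simp add: lev_def)

lemma lev_enemy: "r \<in> Theta n l \<Longrightarrow> j \<in> rE r \<Longrightarrow> 5 \<le> lev n r l j"
  using Theta_memberD(3)[of r n l] by (auto simp: lev_def rI_def)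

lemma lev_not_enemy: "j \<in> agents n - {l} \<Longrightarrow> j \<notin> rE r \<Longrightarrow> lev n r l j \<le> 4"
  by (simp add: lev_def rI_def)

lemma sum_gD_diff:
  assumes "A \<subseteq> agents n"
  shows "(\<Sum>k\<in>A. gD n m' k) - (\<Sum>k\<in>A. gD n m k)
    = 2 / (real n * (real n - 1)) *
      (\<Sum>k\<in>A. \<Sum>j\<in>agents n - A. gD_pair n m' k j - gD_pair n m k j)"
proof -
  have "(\<Sum>k\<in>A. gD n m' k) - (\<Sum>k\<in>A. gD n m k)
    = 2 / (real n * (real n - 1)) *
      (\<Sum>k\<in>A. \<Sum>j\<in>agents n - {k}. gD_pair n m' k j - gD_pair n m k j)"
    by (simp add: gD_def sum_subtractf sum_distrib_left right_diff_distrib)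
  also have "(\<Sum>k\<in>A. \<Sum>j\<in>agents n - {k}. gD_pair n m' k j - gD_pair n m k j)
    = (\<Sum>k\<in>A. \<Sum>j\<in>agents n - A. gD_pair n m' k j - gD_pair n m k j)"
    using gD_pair_add_swap[of n m'] gD_pair_add_swap[of n m]
    by (intro sum_offdiag_antisym[OF finite_agents assms]) (simp add: algebra_simps)
  finally show ?thesis .
qed

lemma sum_gD_mono:
  assumes "2 \<le> n" "A \<subseteq> agents n"
    and "\<And>k j. k \<in> A \<Longrightarrow> j \<in> agents n - A \<Longrightarrow> gD_pair n m' k j \<le> gD_pair n m k j"
  shows "(\<Sum>k\<in>A. gD n m' k) \<le> (\<Sum>k\<in>A. gD n m k)"
proof -
  have "(\<Sum>k\<in>A. \<Sum>j\<in>agents n - A. gD_pair n m' k j - gD_pair n m k j) \<le> 0"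
    using assms(3) by (intro sum_nonpos) simp
  moreover have "2 / (real n * (real n - 1)) > 0"
    using assms(1) by simp
  ultimately have "(\<Sum>k\<in>A. gD n m' k) - (\<Sum>k\<in>A. gD n m k) \<le> 0"
    unfolding sum_gD_diff[OF assms(2)] by (intro mult_nonneg_nonpos) simp_all
  then show ?thesis
    by simp
qed

lemma gD_fun_upd_self: "gD n (m(i := r)) i = gD n m i"
  by (simp add: gD_def gD_pair_fun_upd_member)

lemma gD_pair_friend_fun_upd_le:
  assumes "k \<in> rF (m i)" "j \<notin> rF (m i)"
  shows "gD_pair n (m(i := r)) k j \<le> gD_pair n m k j"
  using assms lev_friend[of k "m i" n i] lev_not_friend[of j "m i" n i]
  by (cases "j = i") (auto simp: gD_pair_fun_upd_member intro!: gD_pair_fun_upd_mono)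

lemma gD_pair_enemy_fun_upd_ge:
  assumes "m \<in> profiles n" "i \<in> agents n" "k \<in> rE (m i)" "j \<in> agents n - rE (m i)"
  shows "gD_pair n m k j \<le> gD_pair n (m(i := r)) k j"
proof (cases "j = i")
  case False
  then have "gD_pair n (m(i := r)) j k \<le> gD_pair n m j k"
    using assms lev_enemy[OF profiles_memberD[OF assms(1,2)] assms(3)] lev_not_enemy[of j n i "m i"]
    by (intro gD_pair_fun_upd_mono) auto
  then show ?thesis
    using gD_pair_add_swap[of n "m(i := r)" j k] gD_pair_add_swap[of n m j k] by simp
qed (simp add: gD_pair_fun_upd_member)

lemma gD_DSIC:
  assumes "2 \<le> n" "w_f > 0" "w_e > 0"
  shows "DSIC n w_f w_e (gD n)"
proof (rule DSIC_if_own_share_unchanged[OF assms(2,3)])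
  fix i m r
  assume i: "i \<in> agents n" and m: "m \<in> profiles n" and r: "r \<in> Theta n i"
  note mi = profiles_memberD[OF m i]
  show "(\<Sum>j\<in>rF (m i). gD n (m(i := r)) j) \<le> (\<Sum>j\<in>rF (m i). gD n m j)"
    using Theta_memberD(1)[OF mi]
    by (intro sum_gD_mono[OF assms(1)] gD_pair_friend_fun_upd_le) auto
  show "(\<Sum>j\<in>rE (m i). gD n m j) \<le> (\<Sum>j\<in>rE (m i). gD n (m(i := r)) j)"
    using Theta_memberD(2)[OF mi]
    by (intro sum_gD_mono[OF assms(1)] gD_pair_enemy_fun_upd_ge[OF m i]) auto
qed (rule gD_fun_upd_self)

lemma gD_valid:
  assumes "2 \<le> n"
  shows "valid n (gD n)"
  unfolding valid_def
proof (intro ballI conjI)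
  fix m i assume "i \<in> agents n"
  have n: "real n \<ge> 2"
    using assms by simp
  show "0 \<le> gD n m i"
    using n by (simp add: gD_def sum_nonneg gD_pair_nonneg)
  have "(\<Sum>j\<in>agents n - {i}. gD_pair n m i j) \<le> (\<Sum>j\<in>agents n - {i}. 1)"
    by (rule sum_mono) (rule gD_pair_le_1)
  also have "\<dots> = real n - 1"
    using \<open>i \<in> agents n\<close> by (rule sum_agents_remove_one)
  finally have "(\<Sum>j\<in>agents n - {i}. gD_pair n m i j) \<le> real n - 1" .
  then have "gD n m i \<le> 2 / (real n * (real n - 1)) * (real n - 1)"
    unfolding gD_def using n by (intro mult_left_mono) simp_all
  also have "\<dots> = 2 / real n"
    using n by (simp add: field_simps)
  also have "\<dots> \<le> 1"
    using n by simp
  finally show "gD n m i \<le> 1" .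
next
  fix m
  let ?S = "\<Sum>i\<in>agents n. \<Sum>j\<in>agents n - {i}. gD_pair n m i j"
  \<comment> \<open>each of the duples contributes 1 to the double sum, counted from both sides\<close>
  have "?S + ?S = (\<Sum>i\<in>agents n. \<Sum>j\<in>agents n - {i}. gD_pair n m i j + gD_pair n m j i)"
    by (subst (2) sum_offdiag_swap) (simp_all add: sum.distrib)
  also have "\<dots> = (\<Sum>i\<in>agents n. real n - 1)"
    by (intro sum.cong refl) (simp only: gD_pair_add_swap sum_agents_remove_one)
  also have "\<dots> = real n * (real n - 1)"
    by simp
  finally have S: "?S = real n * (real n - 1) / 2"
    by simp
  have "(\<Sum>i\<in>agents n. gD n m i) = 2 / (real n * (real n - 1)) * ?S"
    by (simp add: gD_def sum_distrib_left)
  also have "\<dots> = 1"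
    using assms by (simp add: S)
  finally show "(\<Sum>i\<in>agents n. gD n m i) \<le> 1"
    by simp
qed

theorem proposition1:
  fixes n :: nat and w_f w_e :: real
  assumes "n \<ge> 2" and "w_f > 0" and "w_e > 0"
  shows "valid n (gR n) \<and> DSIC n w_f w_e (gR n) \<and> valid n (gD n) \<and> DSIC n w_f w_e (gD n)"
  using gR_valid[OF assms(1)] gR_DSIC[OF assms] gD_valid[OF assms(1)] gD_DSIC[OF assms] by simp

end
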